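(* Let $0<c_1,c_2<1$ with $c_1+c_2=1$ and $c_1\neq c_2$. Then there exists a finitely supported complex sequence $u=(u_n)_{n\in\mathbb{N}}$ such that $$\sum_{k=1}^{\infty}\left[c_1(2k-1)|u_{2k-1}+u_{2k}|^2+c_2(2k)|u_{2k}+u_{2k+1}|^2\right]<\frac{c_1-c_2}{2}\sum_{k=1}^{\infty}\left[|u_{2k-1}|^2-|u_{2k}|^2\right].$$ *)

theory Defs
  imports "HOL-Analysis.Analysis"
begin

end

theory Submission
  imports Defs
begin

text \<open>
  For real \<open>a, b\<close> put \<open>u(2k+1) = -a(k)\<close> and \<open>u(2k+2) = b(k)\<close>. The left-hand side becomes the
  energy \<open>\<Sum>k. c1 (2k+1) (b k - a k)\<^sup>2 + c2 (2k+2) (b k - a (k+1))\<^sup>2\<close> and the right-hand sum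
  the defect \<open>\<Sum>k. (a k)\<^sup>2 - (b k)\<^sup>2\<close>. Both cases use tails of divergent series.

  If \<open>c2 < c1\<close>, let \<open>a k = b (k - 1) = \<Sum>j\<in>{k..<N}. 1/(2j+1)\<close>. Then the energy is \<open>c1 S\<close> and the
  defect telescopes to \<open>S\<^sup>2\<close>, where \<open>S = a 0\<close> can be made arbitrarily large.

  If \<open>c1 < c2\<close>, the defect must be negative. With \<open>s = c2 - c1\<close>, let
  \<open>b k = \<Sum>j\<in>{k..<N}. 1/(2j+2)\<close> and \<open>a = b\<close> except \<open>a 0 = (1 - s) b 0\<close>. For \<open>K = b 0\<close> the energy
  is \<open>c1 s\<^sup>2 K\<^sup>2 + c2 K\<close>, while the right-hand side is \<open>s\<^sup>2 (2 - s) K\<^sup>2 / 2\<close>; the difference is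
  \<open>K (s\<^sup>2 K / 2 - c2)\<close>, positive for large \<open>K\<close>.
\<close>

lemma sum_inverse_even_unbounded: "\<exists>N. B < (\<Sum>k<N. 1 / (2 * real k + 2))"
proof -
  have "\<forall>\<^sub>F n in sequentially. 2 * B + 1 \<le> harm n"
    using harm_at_top filterlim_at_top by blast
  then obtain N where "2 * B + 1 \<le> harm N"
    by (meson eventually_sequentially order_refl)
  moreover have "(\<Sum>k<N. 1 / (2 * real k + 2)) = harm N / 2"
    unfolding harm_altdef by (simp add: sum_divide_distrib field_simps inverse_eq_divide)
  ultimately show ?thesis by (intro exI[of _ N]) linarith
qed

lemma sum_inverse_odd_unbounded: "\<exists>N. B < (\<Sum>k<N. 1 / (2 * real k + 1))"
proof -
  obtain N where "B < (\<Sum>k<N. 1 / (2 * real k + 2))"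
    using sum_inverse_even_unbounded by blast
  moreover have "(\<Sum>k<N. 1 / (2 * real k + 2)) \<le> (\<Sum>k<N. 1 / (2 * real k + 1))"
    by (intro sum_mono) (simp add: frac_le)
  ultimately show ?thesis by (intro exI[of _ N]) linarith
qed

lemma tail_sum_diff:
  fixes f :: "nat \<Rightarrow> 'a::ab_group_add"
  assumes "k < N"
  shows "(\<Sum>j\<in>{k..<N}. f j) - (\<Sum>j\<in>{Suc k..<N}. f j) = f k"
  using assms by (simp add: sum.atLeast_Suc_lessThan)

definition pair_energy :: "real \<Rightarrow> real \<Rightarrow> nat \<Rightarrow> (nat \<Rightarrow> real) \<Rightarrow> (nat \<Rightarrow> real) \<Rightarrow> real"
  where "pair_energy c1 c2 N a b =
    (\<Sum>k<N. c1 * (2 * real k + 1) * (b k - a k)\<^sup>2 + c2 * (2 * real k + 2) * (b k - a (Suc k))\<^sup>2)"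

definition pair_defect :: "nat \<Rightarrow> (nat \<Rightarrow> real) \<Rightarrow> (nat \<Rightarrow> real) \<Rightarrow> real"
  where "pair_defect N a b = (\<Sum>k<N. (a k)\<^sup>2 - (b k)\<^sup>2)"

lemma exists_sequence_of_pair:
  fixes c1 c2 :: real and a b :: "nat \<Rightarrow> real"
  assumes support: "\<And>k. N \<le> k \<Longrightarrow> a k = 0 \<and> b k = 0"
    and gap: "pair_energy c1 c2 N a b < (c1 - c2) / 2 * pair_defect N a b"
  shows "\<exists>u :: nat \<Rightarrow> complex. finite {n. u n \<noteq> 0} \<and>
    (\<Sum>k. (let m = Suc k in
        c1 * real (2*m - 1) * (cmod (u (2*m - 1) + u (2*m)))\<^sup>2
      + c2 * real (2*m) * (cmod (u (2*m) + u (2*m + 1)))\<^sup>2))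
    < (c1 - c2) / 2 * (\<Sum>k. (let m = Suc k in
        (cmod (u (2*m - 1)))\<^sup>2 - (cmod (u (2*m)))\<^sup>2))"
proof -
  define u where "u n = (if even n then complex_of_real (b (n div 2 - 1))
                         else - complex_of_real (a (n div 2)))" for n
  have u_odd: "u (2 * Suc k - 1) = - complex_of_real (a k)" for k
    by (simp add: u_def)
  have u_even: "u (2 * Suc k) = complex_of_real (b k)" for k
    by (simp add: u_def)
  have u_odd_Suc: "u (2 * Suc k + 1) = - complex_of_real (a (Suc k))" for k
    by (simp add: u_def)
  have "n \<le> 2 * N" if "u n \<noteq> 0" for n
  proof (rule ccontr)
    assume "\<not> n \<le> 2 * N"
    then have "u n = 0"
      using support by (cases "even n") (auto simp: u_def elim!: evenE oddE)
    with that show False ..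
  qed
  then have "{n. u n \<noteq> 0} \<subseteq> {..2 * N}"
    by auto
  then have finite_support: "finite {n. u n \<noteq> 0}"
    by (rule finite_subset) simp
  have energy_term: "(let m = Suc k in
        c1 * real (2*m - 1) * (cmod (u (2*m - 1) + u (2*m)))\<^sup>2
      + c2 * real (2*m) * (cmod (u (2*m) + u (2*m + 1)))\<^sup>2)
      = c1 * (2 * real k + 1) * (b k - a k)\<^sup>2 + c2 * (2 * real k + 2) * (b k - a (Suc k))\<^sup>2"
    (is "?L k = ?l k") for k
  proof -
    have "u (2 * Suc k - 1) + u (2 * Suc k) = complex_of_real (b k - a k)"
      and "u (2 * Suc k) + u (2 * Suc k + 1) = complex_of_real (b k - a (Suc k))"
      unfolding u_odd u_even u_odd_Suc by simp_all
    then show ?thesis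
      by (simp only: Let_def norm_of_real power2_abs) (simp add: of_nat_diff algebra_simps)
  qed
  have defect_term: "(let m = Suc k in (cmod (u (2*m - 1)))\<^sup>2 - (cmod (u (2*m)))\<^sup>2) = (a k)\<^sup>2 - (b k)\<^sup>2"
    (is "?R k = ?r k") for k
    by (simp only: Let_def u_odd u_even norm_minus_cancel norm_of_real power2_abs)
  have energy: "(\<Sum>k. ?l k) = pair_energy c1 c2 N a b"
    unfolding pair_energy_def by (rule suminf_finite) (simp_all add: support)
  have defect: "(\<Sum>k. ?r k) = pair_defect N a b"
    unfolding pair_defect_def by (rule suminf_finite) (simp_all add: support)
  have "(\<Sum>k. ?L k) < (c1 - c2) / 2 * (\<Sum>k. ?R k)"
    using gap by (simp only: energy_term defect_term energy defect)
  with finite_support show ?thesis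
    by (intro exI[of _ u] conjI)
qed

lemma exists_pair_c2_less_c1:
  fixes c1 c2 :: real
  assumes "0 < c2" "c2 < c1"
  shows "\<exists>N a b. (\<forall>k. N \<le> k \<longrightarrow> a k = 0 \<and> b k = 0) \<and>
    pair_energy c1 c2 N a b < (c1 - c2) / 2 * pair_defect N a b"
proof -
  obtain N where N: "2 * c1 / (c1 - c2) < (\<Sum>k<N. 1 / (2 * real k + 1))"
    using sum_inverse_odd_unbounded by blast
  define S where "S = (\<Sum>k<N. 1 / (2 * real k + 1))"
  define w where "w k = (\<Sum>j\<in>{k..<N}. 1 / (2 * real j + 1))" for k
  have w_step: "w k - w (Suc k) = 1 / (2 * real k + 1)" if "k < N" for k
    unfolding w_def using that by (rule tail_sum_diff)
  have w_vanish: "w k = 0" if "N \<le> k" for k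
    unfolding w_def using that by simp
  have "pair_energy c1 c2 N w (w \<circ> Suc) = (\<Sum>k<N. c1 * (1 / (2 * real k + 1)))"
    unfolding pair_energy_def
  proof (rule sum.cong)
    fix k assume "k \<in> {..<N}"
    then have "w (Suc k) - w k = - (1 / (2 * real k + 1))"
      using w_step by force
    then show "c1 * (2 * real k + 1) * ((w \<circ> Suc) k - w k)\<^sup>2
        + c2 * (2 * real k + 2) * ((w \<circ> Suc) k - w (Suc k))\<^sup>2 = c1 * (1 / (2 * real k + 1))"
      by (simp add: power2_eq_square)
  qed simp
  then have energy: "pair_energy c1 c2 N w (w \<circ> Suc) = c1 * S"
    by (simp add: S_def sum_distrib_left)
  have "pair_defect N w (w \<circ> Suc) = (w 0)\<^sup>2 - (w N)\<^sup>2"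
    unfolding pair_defect_def o_def by (rule sum_lessThan_telescope')
  then have defect: "pair_defect N w (w \<circ> Suc) = S\<^sup>2"
    by (simp add: w_vanish w_def S_def atLeast0LessThan)
  have "0 < 2 * c1 / (c1 - c2)"
    using assms by simp
  with N have "0 < S"
    unfolding S_def by linarith
  have "2 * c1 < (c1 - c2) * S"
    using N assms unfolding S_def[symmetric] by (simp add: field_simps)
  with \<open>0 < S\<close> have "2 * c1 * S < (c1 - c2) * S * S"
    by (simp add: mult_strict_right_mono)
  then have "pair_energy c1 c2 N w (w \<circ> Suc) < (c1 - c2) / 2 * pair_defect N w (w \<circ> Suc)"
    unfolding energy defect by (simp add: power2_eq_square)
  moreover have "\<forall>k. N \<le> k \<longrightarrow> w k = 0 \<and> (w \<circ> Suc) k = 0"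
    by (simp add: w_vanish)
  ultimately show ?thesis
    by blast
qed

lemma exists_pair_c1_less_c2:
  fixes c1 c2 :: real
  assumes "0 < c1" "c1 < c2" "c1 + c2 = 1"
  shows "\<exists>N a b. (\<forall>k. N \<le> k \<longrightarrow> a k = 0 \<and> b k = 0) \<and>
    pair_energy c1 c2 N a b < (c1 - c2) / 2 * pair_defect N a b"
proof -
  define s where "s = c2 - c1"
  have "0 < s" "c1 = (1 - s) / 2" "c2 = (1 + s) / 2"
    using assms by (simp_all add: s_def)
  obtain N where N: "2 * c2 / s\<^sup>2 < (\<Sum>k<N. 1 / (2 * real k + 2))"
    using sum_inverse_even_unbounded by blast
  define K where "K = (\<Sum>k<N. 1 / (2 * real k + 2))"
  have "0 < 2 * c2 / s\<^sup>2"
    using assms \<open>0 < s\<close> by simp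
  with N have "0 < K"
    unfolding K_def by linarith
  then have "0 < N"
    unfolding K_def by (cases N) auto
  define z where "z k = (\<Sum>j\<in>{k..<N}. 1 / (2 * real j + 2))" for k
  define a where "a k = (if k = 0 then (1 - s) * K else z k)" for k
  have z_step: "z k - z (Suc k) = 1 / (2 * real k + 2)" if "k < N" for k
    unfolding z_def using that by (rule tail_sum_diff)
  have z_vanish: "z k = 0" if "N \<le> k" for k
    unfolding z_def using that by simp
  have z0: "z 0 = K"
    by (simp add: z_def K_def atLeast0LessThan)
  have "pair_energy c1 c2 N a z
      = (\<Sum>k<N. (if k = 0 then c1 * s\<^sup>2 * K\<^sup>2 else 0) + c2 * (1 / (2 * real k + 2)))"
    unfolding pair_energy_def
  proof (rule sum.cong)
    fix k assume "k \<in> {..<N}"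
    then have "c2 * (2 * real k + 2) * (z k - a (Suc k))\<^sup>2 = c2 * (1 / (2 * real k + 2))"
      using z_step by (simp add: a_def power2_eq_square)
    moreover have "c1 * (2 * real k + 1) * (z k - a k)\<^sup>2 = (if k = 0 then c1 * s\<^sup>2 * K\<^sup>2 else 0)"
      by (simp add: a_def z0 algebra_simps power2_eq_square)
    ultimately show "c1 * (2 * real k + 1) * (z k - a k)\<^sup>2 + c2 * (2 * real k + 2) * (z k - a (Suc k))\<^sup>2
        = (if k = 0 then c1 * s\<^sup>2 * K\<^sup>2 else 0) + c2 * (1 / (2 * real k + 2))"
      by simp
  qed simp
  then have energy: "pair_energy c1 c2 N a z = c1 * s\<^sup>2 * K\<^sup>2 + c2 * K"
    using \<open>0 < N\<close> by (simp add: K_def sum.distrib sum_distrib_left)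
  have "pair_defect N a z = (\<Sum>k<N. if k = 0 then ((1 - s)\<^sup>2 - 1) * K\<^sup>2 else 0)"
    unfolding pair_defect_def
    by (rule sum.cong) (simp_all add: a_def z0 power2_eq_square algebra_simps)
  then have defect: "pair_defect N a z = ((1 - s)\<^sup>2 - 1) * K\<^sup>2"
    using \<open>0 < N\<close> by simp
  have gain: "(c1 - c2) / 2 * (((1 - s)\<^sup>2 - 1) * K\<^sup>2) - (c1 * s\<^sup>2 * K\<^sup>2 + c2 * K)
      = K * (s\<^sup>2 * K / 2 - c2)"
    unfolding \<open>c1 = _\<close> \<open>c2 = _\<close> by (simp add: power2_eq_square field_simps)
  have "2 * c2 < s\<^sup>2 * K"
    using N \<open>0 < s\<close> unfolding K_def[symmetric] by (simp add: field_simps)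
  with \<open>0 < K\<close> have "0 < K * (s\<^sup>2 * K / 2 - c2)"
    by simp
  with gain have "pair_energy c1 c2 N a z < (c1 - c2) / 2 * pair_defect N a z"
    unfolding energy defect by linarith
  moreover have "\<forall>k. N \<le> k \<longrightarrow> a k = 0 \<and> z k = 0"
    using \<open>0 < N\<close> z_vanish by (simp add: a_def)
  ultimately show ?thesis
    by blast
qed

theorem lemma3:
  fixes c1 c2 :: real
  assumes "0 < c1" "c1 < 1" "0 < c2" "c2 < 1" "c1 + c2 = 1" "c1 \<noteq> c2"
  shows "\<exists>u :: nat \<Rightarrow> complex. finite {n. u n \<noteq> 0} \<and>
    (\<Sum>k. (let m = Suc k in
        c1 * real (2*m - 1) * (cmod (u (2*m - 1) + u (2*m)))\<^sup>2
      + c2 * real (2*m) * (cmod (u (2*m) + u (2*m + 1)))\<^sup>2))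
    < (c1 - c2) / 2 * (\<Sum>k. (let m = Suc k in
        (cmod (u (2*m - 1)))\<^sup>2 - (cmod (u (2*m)))\<^sup>2))"
proof -
  have "\<exists>N a b. (\<forall>k. N \<le> k \<longrightarrow> a k = 0 \<and> b k = 0) \<and>
    pair_energy c1 c2 N a b < (c1 - c2) / 2 * pair_defect N a b"
  proof (cases "c2 < c1")
    case True
    then show ?thesis using exists_pair_c2_less_c1 assms by blast
  next
    case False
    then show ?thesis using exists_pair_c1_less_c2 assms by simp
  qed
  then obtain N a b where "\<And>k. N \<le> k \<Longrightarrow> a k = 0 \<and> b k = 0"
    and "pair_energy c1 c2 N a b < (c1 - c2) / 2 * pair_defect N a b"
    by blast
  then show ?thesis by (rule exists_sequence_of_pair)
qed

end
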